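(* Let $N\ge 1$ patches, indexed $I=1,\dots,N$, be equispaced with macroscale spacing $H>0$ on an $L$-periodic domain, $L=NH$. Each patch carries $n\ge1$ interior lattice points with microscale spacing $d>0$, so the patch width is $h=nd=rH$ with $0<r\le 1$, and the left-next-to-edge point of patch $I$ is at $x^I_1=x^1_1+(I-1)H$. The interior values $u^I_i(t)\in\mathbb{R}$, $i=1,\dots,n$, evolve by $$d^2\partial_t u^I_i=\kappa^I_{i+\frac12}(u^I_{i+1}-u^I_i)+\kappa^I_{i-\frac12}(u^I_{i-1}-u^I_i),\qquad i=1,\dots,n,$$ with real diffusivities $\kappa^I_{i\pm1/2}$ satisfying $\kappa^I_{1/2}=\kappa^J_{n+1/2}$ for all patches $I,J$. The edge values are defined by spectral interpolation $$u^I_{n+1}=\sum_{J=1}^N \mathcal I^{IJ}_{n1}u^J_1,\quad \mathcal I^{IJ}_{n1}=\frac1N\sum_{k\in\mathcal K}e^{\mathrm{i}kH(I-J+r)},\qquad u^I_{0}=\sum_{J=1}^N \mathcal I^{IJ}_{1n}u^J_n,\quad \mathcal I^{IJ}_{1n}=\frac1N\sum_{k\in\mathcal K}e^{\mathrm{i}kH(I-J-r)},$$ where $\mathcal K$ is a fixed finite set of integer multiples of $2\pi/L$ that is symmetric ($k\in\mathcal K\Rightarrow -k\in\mathcal K$). Then all $\mathcal I^{IJ}_{n1},\mathcal I^{IJ}_{1n}$ are real, $\mathcal I^{IJ}_{1n}=\mathcal I^{JI}_{n1}$ for all $I,J$, and the resulting linear system $\partial_t\mathbf u=\mathcal L\mathbf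 u$ for $\mathbf u=(u^1_1,\dots,u^1_n,\dots,u^N_1,\dots,u^N_n)\in\mathbb R^{nN}$ has a real symmetric (hence self-adjoint) matrix $\mathcal L$.
   Context: This is the "self-adjoint patch scheme" for 1D heterogeneous lattice diffusion: each patch's edge values $u^I_0$ and $u^I_{n+1}$ are not dynamic variables but are set by interpolating from the next-to-edge values of (possibly all) patches, with the left edge interpolated from the right-next-to-edge values $u^J_n$ and the right edge from the left-next-to-edge values $u^J_1$. Here $\mathrm i=\sqrt{-1}$. A real square matrix is self-adjoint (for the standard inner product) iff it is symmetric. *)

theory Defs
  imports Complex_Main
begin

text \<open>Diffusivities: kap I j = kappa^I_(j - 1/2), for j = 1..n+1.\<close>

definition interp_n1 :: "nat \<Rightarrow> real \<Rightarrow> real \<Rightarrow> real set \<Rightarrow> nat \<Rightarrow> nat \<Rightarrow> complex" where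
  "interp_n1 N H r K I J =
     (1 / of_nat N) * (\<Sum>k\<in>K. exp (\<i> * complex_of_real (k * H * (real I - real J + r))))"

definition interp_1n :: "nat \<Rightarrow> real \<Rightarrow> real \<Rightarrow> real set \<Rightarrow> nat \<Rightarrow> nat \<Rightarrow> complex" where
  "interp_1n N H r K I J =
     (1 / of_nat N) * (\<Sum>k\<in>K. exp (\<i> * complex_of_real (k * H * (real I - real J - r))))"

definition patch_val ::
  "nat \<Rightarrow> nat \<Rightarrow> real \<Rightarrow> real \<Rightarrow> real set \<Rightarrow> (nat \<times> nat \<Rightarrow> real) \<Rightarrow> nat \<Rightarrow> nat \<Rightarrow> complex" where
  "patch_val N n H r K u I j =
     (if j = 0 then (\<Sum>J=1..N. interp_1n N H r K I J * complex_of_real (u (J, n)))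
      else if j = n + 1 then (\<Sum>J=1..N. interp_n1 N H r K I J * complex_of_real (u (J, 1)))
      else complex_of_real (u (I, j)))"

definition patch_rhs ::
  "nat \<Rightarrow> nat \<Rightarrow> real \<Rightarrow> real \<Rightarrow> real \<Rightarrow> real set \<Rightarrow> (nat \<Rightarrow> nat \<Rightarrow> real)
   \<Rightarrow> (nat \<times> nat \<Rightarrow> real) \<Rightarrow> nat \<times> nat \<Rightarrow> complex" where
  "patch_rhs N n d H r K kap u p =
     (let I = fst p; i = snd p; v = patch_val N n H r K u I in
      (1 / complex_of_real (d\<^sup>2)) *
        (complex_of_real (kap I (i + 1)) * (v (i + 1) - v i)
         + complex_of_real (kap I i) * (v (i - 1) - v i)))"

definition patch_idx :: "nat \<Rightarrow> nat \<Rightarrow> (nat \<times> nat) set" where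
  "patch_idx N n = {1..N} \<times> {1..n}"

end

theory Submission
  imports Defs
begin

text \<open>Since \<open>K\<close> is symmetric, sums over \<open>K\<close> are invariant under \<open>k \<mapsto> -k\<close>. This cancels the
  sine parts of the interpolation weights, so they are real, and it turns the phase
  \<open>I - J - r\<close> into \<open>J - I + r\<close>, so the weight of \<open>u^J_n\<close> in \<open>u^I_0\<close> equals the weight
  of \<open>u^I_1\<close> in \<open>u^J_(n+1)\<close>. Substituting the edge values into the stencil gives a real
  matrix whose interior part is the usual symmetric tridiagonal one, while the entry
  coupling \<open>u^I_n\<close> to \<open>u^J_1\<close> is \<open>\<kappa>^I_(n+1/2) A I J\<close> and the reverse entry is
  \<open>\<kappa>^J_(1/2) A I J\<close>; these agree because all edge diffusivities coincide.\<close>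

lemma sum_reflect_symmetric:
  fixes K :: "'a::ab_group_add set"
  assumes "\<forall>k\<in>K. - k \<in> K"
  shows "(\<Sum>k\<in>K. f (- k)) = (\<Sum>k\<in>K. f k)"
  by (rule sum.reindex_bij_witness[of _ uminus uminus]) (use assms in auto)

lemma Im_sum_exp_symmetric:
  assumes "\<forall>k\<in>K. - k \<in> K"
  shows "Im (\<Sum>k\<in>K. exp (\<i> * complex_of_real (k * c))) = 0"
proof -
  have "(\<Sum>k\<in>K. sin (k * c)) = (\<Sum>k\<in>K. sin (- k * c))"
    using sum_reflect_symmetric[OF assms, of "\<lambda>k. sin (k * c)"] by simp
  also have "\<dots> = - (\<Sum>k\<in>K. sin (k * c))"
    by (simp add: sum_negf)
  finally show ?thesis
    by (simp add: Im_exp)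
qed

lemma Im_interp_n1:
  assumes "\<forall>k\<in>K. - k \<in> K"
  shows "Im (interp_n1 N H r K I J) = 0"
  using Im_sum_exp_symmetric[OF assms, of "H * (real I - real J + r)"]
  by (simp add: interp_n1_def mult.assoc)

lemma Im_interp_1n:
  assumes "\<forall>k\<in>K. - k \<in> K"
  shows "Im (interp_1n N H r K I J) = 0"
  using Im_sum_exp_symmetric[OF assms, of "H * (real I - real J - r)"]
  by (simp add: interp_1n_def mult.assoc)

lemma interp_1n_eq_interp_n1_swap:
  assumes "\<forall>k\<in>K. - k \<in> K"
  shows "interp_1n N H r K I J = interp_n1 N H r K J I"
proof -
  have "(\<Sum>k\<in>K. exp (\<i> * complex_of_real (k * H * (real J - real I + r))))
      = (\<Sum>k\<in>K. exp (\<i> * complex_of_real (- k * H * (real J - real I + r))))"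
    using sum_reflect_symmetric[OF assms,
        of "\<lambda>k. exp (\<i> * complex_of_real (k * H * (real J - real I + r)))"] by simp
  also have "\<dots> = (\<Sum>k\<in>K. exp (\<i> * complex_of_real (k * H * (real I - real J - r))))"
    by (simp add: algebra_simps)
  finally show ?thesis
    by (simp add: interp_1n_def interp_n1_def)
qed

text \<open>\<open>A I J\<close> stands for the real weight \<open>interp_n1 N H r K I J\<close>; the last two terms come
  from substituting the interpolated edge values \<open>u^I_(n+1)\<close> and \<open>u^I_0\<close>.\<close>
fun patch_matrix ::
  "nat \<Rightarrow> real \<Rightarrow> (nat \<Rightarrow> nat \<Rightarrow> real) \<Rightarrow> (nat \<Rightarrow> nat \<Rightarrow> real)
   \<Rightarrow> nat \<times> nat \<Rightarrow> nat \<times> nat \<Rightarrow> real" where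
  "patch_matrix n d kap A (I, i) (J, j) =
     ((if J = I \<and> j = i + 1 then kap I j else 0)
      + (if J = I \<and> i = j + 1 then kap I i else 0)
      - (if J = I \<and> j = i then kap I (i + 1) + kap I i else 0)
      + (if i = n \<and> j = 1 then kap I (n + 1) * A I J else 0)
      + (if i = 1 \<and> j = n then kap I 1 * A J I else 0)) / d\<^sup>2"

lemma patch_matrix_symmetric:
  assumes "\<forall>I\<in>{1..N}. \<forall>J\<in>{1..N}. kap I 1 = kap J (n + 1)"
    and "p \<in> patch_idx N n" and "q \<in> patch_idx N n"
  shows "patch_matrix n d kap A p q = patch_matrix n d kap A q p"
proof -
  obtain I i J j where pq: "p = (I, i)" "q = (J, j)" and "I \<in> {1..N}" "J \<in> {1..N}"
    using assms(2,3) by (auto simp: patch_idx_def)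
  with assms(1) have "kap I 1 = kap J (n + 1)" "kap J 1 = kap I (n + 1)"
    by blast+
  then have "(if i = n \<and> j = 1 then kap I (n + 1) * A I J else 0)
             = (if j = 1 \<and> i = n then kap J 1 * A I J else 0)"
    "(if i = 1 \<and> j = n then kap I 1 * A J I else 0)
             = (if j = n \<and> i = 1 then kap J (n + 1) * A J I else 0)"
    by auto
  moreover have "(if J = I \<and> j = i + 1 then kap I j else 0)
             = (if I = J \<and> j = i + 1 then kap J j else 0)"
    "(if J = I \<and> i = j + 1 then kap I i else 0)
             = (if I = J \<and> i = j + 1 then kap J i else 0)"
    "(if J = I \<and> j = i then kap I (i + 1) + kap I i else 0)
             = (if I = J \<and> i = j then kap J (j + 1) + kap J j else 0)"
    by auto
  ultimately show ?thesis
    unfolding pq patch_matrix.simps by (simp only: ac_simps)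
qed

lemma sum_sum_column:
  assumes "finite B"
  shows "(\<Sum>J\<in>A. \<Sum>j\<in>B. (if j = a then g J else 0) * u (J, j))
       = (if a \<in> B then \<Sum>J\<in>A. g J * u (J, a) else (0::'a::comm_semiring_1))"
  using assms by (simp add: if_distrib[of "\<lambda>x. x * _"] sum.delta' cong: if_cong)

lemma patch_matrix_row_sum:
  assumes "I \<in> {1..N}" "1 \<le> i" "i \<le> n"
  shows "(\<Sum>q\<in>patch_idx N n. patch_matrix n d kap A (I, i) q * u q)
    = (kap I (i + 1) * ((if i = n then \<Sum>J=1..N. A I J * u (J, 1) else u (I, i + 1)) - u (I, i))
       + kap I i * ((if i = 1 then \<Sum>J=1..N. A J I * u (J, n) else u (I, i - 1)) - u (I, i))) / d\<^sup>2"
    (is "_ = ?rhs")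
proof -
  let ?col = "\<lambda>a g. \<Sum>J=1..N. \<Sum>j=1..n. (if j = a then g J else 0) * u (J, j)"
  have entry: "patch_matrix n d kap A (I, i) (J, j)
     = ((if j = i + 1 then (if J = I then kap I (i + 1) else 0) else 0)
       + (if j = i - 1 then (if J = I then kap I i else 0) else 0)
       - (if j = i then (if J = I then kap I (i + 1) + kap I i else 0) else 0)
       + (if j = 1 then (if i = n then kap I (n + 1) * A I J else 0) else 0)
       + (if j = n then (if i = 1 then kap I 1 * A J I else 0) else 0)) / d\<^sup>2" for J j
    using assms(2) by auto
  have "(\<Sum>q\<in>patch_idx N n. patch_matrix n d kap A (I, i) q * u q)
     = (\<Sum>J=1..N. \<Sum>j=1..n. patch_matrix n d kap A (I, i) (J, j) * u (J, j))"
    unfolding patch_idx_def sum.cartesian_product by (rule sum.cong) auto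
  also have "\<dots> = (?col (i + 1) (\<lambda>J. if J = I then kap I (i + 1) else 0)
      + ?col (i - 1) (\<lambda>J. if J = I then kap I i else 0)
      - ?col i (\<lambda>J. if J = I then kap I (i + 1) + kap I i else 0)
      + ?col 1 (\<lambda>J. if i = n then kap I (n + 1) * A I J else 0)
      + ?col n (\<lambda>J. if i = 1 then kap I 1 * A J I else 0)) / d\<^sup>2"
    unfolding entry
    by (simp only: times_divide_eq_left ring_distribs sum_divide_distrib[symmetric] sum.distrib sum_subtractf)
  also have "\<dots> = ((if i + 1 \<in> {1..n} then kap I (i + 1) * u (I, i + 1) else 0)
      + (if i - 1 \<in> {1..n} then kap I i * u (I, i - 1) else 0)
      - (kap I (i + 1) + kap I i) * u (I, i)
      + (if i = n then kap I (n + 1) * (\<Sum>J=1..N. A I J * u (J, 1)) else 0)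
      + (if i = 1 then kap I 1 * (\<Sum>J=1..N. A J I * u (J, n)) else 0)) / d\<^sup>2"
  proof -
    have col: "?col a g = (if a \<in> {1..n} then \<Sum>J=1..N. g J * u (J, a) else 0)" for a g
      by (rule sum_sum_column) simp
    have delta: "(\<Sum>J=1..N. (if J = I then c else 0) * u (J, a)) = c * u (I, a)" for c a
      using assms(1) by (simp add: if_distrib[of "\<lambda>x. x * _"] sum.delta cong: if_cong)
    have "i \<in> {1..n}" "1 \<in> {1..n}" "n \<in> {1..n}"
      using assms(2,3) by auto
    then show ?thesis
      unfolding col delta by (simp add: sum_distrib_left mult.assoc del: atLeastAtMost_iff)
  qed
  also have "\<dots> = ?rhs"
    using assms by (cases "i = n"; cases "i = 1") (auto simp: algebra_simps)
  finally show ?thesis .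
qed

lemma patch_rhs_real_stencil:
  assumes "\<And>I J. interp_n1 N H r K I J = complex_of_real (A I J)"
    and "\<And>I J. interp_1n N H r K I J = complex_of_real (A J I)"
    and "1 \<le> i" "i \<le> n"
  shows "patch_rhs N n d H r K kap u (I, i)
    = complex_of_real
       ((kap I (i + 1) * ((if i = n then \<Sum>J=1..N. A I J * u (J, 1) else u (I, i + 1)) - u (I, i))
         + kap I i * ((if i = 1 then \<Sum>J=1..N. A J I * u (J, n) else u (I, i - 1)) - u (I, i)))
        / d\<^sup>2)"
proof -
  have "patch_val N n H r K u I (i + 1)
      = complex_of_real (if i = n then \<Sum>J=1..N. A I J * u (J, 1) else u (I, i + 1))"
    "patch_val N n H r K u I (i - 1)
      = complex_of_real (if i = 1 then \<Sum>J=1..N. A J I * u (J, n) else u (I, i - 1))"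
    "patch_val N n H r K u I i = complex_of_real (u (I, i))"
    using assms unfolding patch_val_def by auto
  then show ?thesis
    by (simp add: patch_rhs_def Let_def add_divide_distrib)
qed

lemma patch_rhs_eq_patch_matrix:
  assumes "\<And>I J. interp_n1 N H r K I J = complex_of_real (A I J)"
    and "\<And>I J. interp_1n N H r K I J = complex_of_real (A J I)"
    and "p \<in> patch_idx N n"
  shows "patch_rhs N n d H r K kap u p
    = complex_of_real (\<Sum>q\<in>patch_idx N n. patch_matrix n d kap A p q * u q)"
proof -
  obtain I i where "p = (I, i)" "I \<in> {1..N}" "1 \<le> i" "i \<le> n"
    using assms(3) by (auto simp: patch_idx_def)
  then show ?thesis
    using patch_rhs_real_stencil[OF assms(1,2)] patch_matrix_row_sum by simp
qed

theorem lemma1: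
  fixes N n :: nat and H d r L h :: real and K :: "real set"
    and kap :: "nat \<Rightarrow> nat \<Rightarrow> real"
  assumes "N \<ge> 1" and "n \<ge> 1" and "H > 0" and "d > 0"
    and "0 < r" and "r \<le> 1"
    and "L = real N * H" and "h = real n * d" and "h = r * H"
    and "finite K"
    and "\<forall>k\<in>K. \<exists>m::int. k = real_of_int m * 2 * pi / L"
    and "\<forall>k\<in>K. - k \<in> K"
    and "\<forall>I\<in>{1..N}. \<forall>J\<in>{1..N}. kap I 1 = kap J (n + 1)"
  shows "(\<forall>I\<in>{1..N}. \<forall>J\<in>{1..N}.
            Im (interp_n1 N H r K I J) = 0 \<and> Im (interp_1n N H r K I J) = 0 \<and>
            interp_1n N H r K I J = interp_n1 N H r K J I)
       \<and> (\<exists>M :: nat \<times> nat \<Rightarrow> nat \<times> nat \<Rightarrow> real.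
            (\<forall>p\<in>patch_idx N n. \<forall>q\<in>patch_idx N n. M p q = M q p) \<and>
            (\<forall>u p. p \<in> patch_idx N n \<longrightarrow>
               patch_rhs N n d H r K kap u p
                 = complex_of_real (\<Sum>q\<in>patch_idx N n. M p q * u q)))"
proof -
  note K_symmetric = \<open>\<forall>k\<in>K. - k \<in> K\<close>
  define A where "A I J = Re (interp_n1 N H r K I J)" for I J
  have A_n1: "interp_n1 N H r K I J = complex_of_real (A I J)" for I J
    using Im_interp_n1[OF K_symmetric] by (simp add: A_def complex_eq_iff)
  have A_1n: "interp_1n N H r K I J = complex_of_real (A J I)" for I J
    by (simp add: interp_1n_eq_interp_n1_swap[OF K_symmetric] A_n1)
  show ?thesis
  proof (intro conjI exI allI impI ballI)
    fix I J
    show "Im (interp_n1 N H r K I J) = 0" "Im (interp_1n N H r K I J) = 0"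
      "interp_1n N H r K I J = interp_n1 N H r K J I"
      using K_symmetric by (rule Im_interp_n1 Im_interp_1n interp_1n_eq_interp_n1_swap)+
  next
    fix p q
    assume "p \<in> patch_idx N n" "q \<in> patch_idx N n"
    with \<open>\<forall>I\<in>{1..N}. \<forall>J\<in>{1..N}. kap I 1 = kap J (n + 1)\<close>
    show "patch_matrix n d kap A p q = patch_matrix n d kap A q p"
      by (rule patch_matrix_symmetric)
  next
    fix u p
    assume "p \<in> patch_idx N n"
    with A_n1 A_1n show "patch_rhs N n d H r K kap u p
        = complex_of_real (\<Sum>q\<in>patch_idx N n. patch_matrix n d kap A p q * u q)"
      by (rule patch_rhs_eq_patch_matrix)
  qed
qed

end
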